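(* Let $e,e'$ be distinct edges in a hypergraph $H=(V,E)$ and let $k$ be a positive integer. (1) If $\gamma_H(e)\ge k$ and $e'$ is a $k$-weak edge, then $\gamma_H(e)=\gamma_{H'}(e)$ where $H'=H\setminus e'$. (2) Suppose $\gamma_H(e)<k$ and $e'$ is a $k$-strong edge. Let $H'=H/e'$ be obtained by contracting $e'$. If $f$ is the edge of $H'$ corresponding to $e$, then $\gamma_H(e)=\gamma_{H'}(f)$.
   Context: A hypergraph $H=(V,E)$ has edges that are subsets of $V$. For $U\subseteq V$, $H[U]=(U,\{e\in E:e\subseteq U\})$. For $A\subseteq V$, $\delta_H(A)$ is the set of edges meeting both $A$ and $V\setminus A$; $\lambda(H)=\min_{\emptyset\subsetneq A\subsetneq V}|\delta_H(A)|$. The strength of $e$ is $\gamma_H(e)=\max_{e\subseteq U\subseteq V}\lambda(H[U])$. An edge $e$ is $k$-strong if $\gamma_H(e)\ge k$ and $k$-weak otherwise. $H\setminus e'$ denotes deletion of $e'$. Contracting $e'$ yields $H/e'$: all vertices of $e'$ are identified into one new vertex $v_{e'}$; edges contained in $e'$ are removed; every other edge $g$ meeting $e'$ has $g\cap e'$ replaced by $v_{e'}$. *)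

theory Defs
  imports Main "HOL-Library.Extended_Nat"
begin

text \<open>A hypergraph is given by a vertex set V, a set of edge labels E and an
incidence map I assigning to each edge label its vertex set (edge labels allow
parallel edges, which arise e.g. under contraction).\<close>

definition hypergraph :: "'v set \<Rightarrow> 'e set \<Rightarrow> ('e \<Rightarrow> 'v set) \<Rightarrow> bool" where
  "hypergraph V E I \<longleftrightarrow> finite V \<and> finite E \<and> (\<forall>e\<in>E. I e \<subseteq> V)"

definition cut_edges :: "'v set \<Rightarrow> 'e set \<Rightarrow> ('e \<Rightarrow> 'v set) \<Rightarrow> 'v set \<Rightarrow> 'e set" where
  "cut_edges V E I A = {e \<in> E. I e \<inter> A \<noteq> {} \<and> I e \<inter> (V - A) \<noteq> {}}"

text \<open>lambda(H): minimum cut size; the minimum over the empty family is infinity.\<close>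
definition edge_conn :: "'v set \<Rightarrow> 'e set \<Rightarrow> ('e \<Rightarrow> 'v set) \<Rightarrow> enat" where
  "edge_conn V E I = (INF A \<in> {A. A \<noteq> {} \<and> A \<subset> V}. enat (card (cut_edges V E I A)))"

definition induced_edges :: "'e set \<Rightarrow> ('e \<Rightarrow> 'v set) \<Rightarrow> 'v set \<Rightarrow> 'e set" where
  "induced_edges E I U = {e \<in> E. I e \<subseteq> U}"

definition strength :: "'v set \<Rightarrow> 'e set \<Rightarrow> ('e \<Rightarrow> 'v set) \<Rightarrow> 'e \<Rightarrow> enat" where
  "strength V E I e = (SUP U \<in> {U. I e \<subseteq> U \<and> U \<subseteq> V}. edge_conn U (induced_edges E I U) I)"

text \<open>Contraction of edge e': every vertex of e' is mapped to the new vertex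
(represented by the set I e'), every other vertex v to {v}.\<close>
definition contr_map :: "('e \<Rightarrow> 'v set) \<Rightarrow> 'e \<Rightarrow> 'v \<Rightarrow> 'v set" where
  "contr_map I e' v = (if v \<in> I e' then I e' else {v})"

definition contr_V :: "'v set \<Rightarrow> ('e \<Rightarrow> 'v set) \<Rightarrow> 'e \<Rightarrow> 'v set set" where
  "contr_V V I e' = contr_map I e' ` V"

definition contr_E :: "'e set \<Rightarrow> ('e \<Rightarrow> 'v set) \<Rightarrow> 'e \<Rightarrow> 'e set" where
  "contr_E E I e' = {g \<in> E. \<not> I g \<subseteq> I e'}"

definition contr_I :: "('e \<Rightarrow> 'v set) \<Rightarrow> 'e \<Rightarrow> 'e \<Rightarrow> 'v set set" where
  "contr_I I e' g = contr_map I e' ` I g"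

end

theory Submission
  imports Defs
begin

text \<open>Only the comparison of the two strengths matters, not the threshold k.
Deleting a weaker edge e' can only hurt subhypergraphs containing e', and those have
connectivity at most the strength of e' < the strength of e. Contraction never lowers
connectivity; conversely, a subhypergraph of H/e' lifts to its preimage U in H, and
if U meets e' we glue to U a set W containing e' whose connectivity exceeds the
strength of e: a cut of U \<union> W either splits W or restricts to a cut of U
not splitting e', which comes from a cut of the contracted subhypergraph.\<close>

abbreviation induced_conn :: "'e set \<Rightarrow> ('e \<Rightarrow> 'v set) \<Rightarrow> 'v set \<Rightarrow> enat" where
  "induced_conn E I U \<equiv> edge_conn U (induced_edges E I U) I"

lemma edge_conn_le_cut:
  "A \<noteq> {} \<Longrightarrow> A \<subset> U \<Longrightarrow> edge_conn U F I \<le> enat (card (cut_edges U F I A))"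
  unfolding edge_conn_def by (rule INF_lower) auto

lemma edge_conn_greatest:
  "(\<And>A. A \<noteq> {} \<Longrightarrow> A \<subset> U \<Longrightarrow> m \<le> enat (card (cut_edges U F I A))) \<Longrightarrow> m \<le> edge_conn U F I"
  unfolding edge_conn_def by (rule INF_greatest) auto

lemma induced_conn_le_strength:
  "I e \<subseteq> U \<Longrightarrow> U \<subseteq> V \<Longrightarrow> induced_conn E I U \<le> strength V E I e"
  unfolding strength_def by (rule SUP_upper) auto

lemma strength_least:
  "(\<And>U. I e \<subseteq> U \<Longrightarrow> U \<subseteq> V \<Longrightarrow> induced_conn E I U \<le> m) \<Longrightarrow> strength V E I e \<le> m"
  unfolding strength_def by (rule SUP_least) auto

lemma less_strength_witness:
  assumes "x < strength V E I e"
  obtains U where "I e \<subseteq> U" "U \<subseteq> V" "x < induced_conn E I U"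
  using assms unfolding strength_def less_SUP_iff by blast

lemma card_cut_edges_mono:
  assumes "finite F'" "cut_edges U F I A \<subseteq> cut_edges U' F' I' A'"
  shows "enat (card (cut_edges U F I A)) \<le> enat (card (cut_edges U' F' I' A'))"
proof -
  have "finite (cut_edges U' F' I' A')"
    using assms(1) by (rule finite_subset[rotated]) (auto simp: cut_edges_def)
  then show ?thesis using assms(2) by (simp add: card_mono)
qed

lemma edge_conn_mono_edges:
  assumes "finite F" "F' \<subseteq> F"
  shows "edge_conn U F' I \<le> edge_conn U F I"
proof (rule edge_conn_greatest)
  fix A assume A: "A \<noteq> {}" "A \<subset> U"
  have "edge_conn U F' I \<le> enat (card (cut_edges U F' I A))" by (rule edge_conn_le_cut[OF A])
  also have "\<dots> \<le> enat (card (cut_edges U F I A))"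
    using assms by (intro card_cut_edges_mono) (auto simp: cut_edges_def)
  finally show "edge_conn U F' I \<le> enat (card (cut_edges U F I A))" .
qed

lemma strength_antimono_edge:
  assumes "I e \<subseteq> I e'"
  shows "strength V E I e' \<le> strength V E I e"
  by (rule strength_least, rule induced_conn_le_strength) (use assms in auto)

lemma strength_delete_weaker_edge:
  assumes "finite E" and weaker: "strength V E I e' < strength V E I e"
  shows "strength V (E - {e'}) I e = strength V E I e"
proof (rule antisym)
  show "strength V (E - {e'}) I e \<le> strength V E I e"
  proof (rule strength_least)
    fix U assume U: "I e \<subseteq> U" "U \<subseteq> V"
    have "induced_conn (E - {e'}) I U \<le> induced_conn E I U"
      using assms(1) by (intro edge_conn_mono_edges) (auto simp: induced_edges_def)
    also have "\<dots> \<le> strength V E I e" by (rule induced_conn_le_strength[where I=I and e=e, OF U])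
    finally show "induced_conn (E - {e'}) I U \<le> strength V E I e" .
  qed
  let ?s = "strength V (E - {e'}) I e"
  have "strength V E I e \<le> max ?s (strength V E I e')"
  proof (rule strength_least)
    fix U assume U: "I e \<subseteq> U" "U \<subseteq> V"
    show "induced_conn E I U \<le> max ?s (strength V E I e')"
    proof (cases "I e' \<subseteq> U")
      case True
      then have "induced_conn E I U \<le> strength V E I e'"
        using U by (intro induced_conn_le_strength)
      then show ?thesis by (simp add: le_max_iff_disj)
    next
      case False
      then have "induced_edges E I U = induced_edges (E - {e'}) I U"
        by (auto simp: induced_edges_def)
      then have "induced_conn E I U \<le> ?s"
        using induced_conn_le_strength[where I=I and e=e and E="E - {e'}", OF U] by simp
      then show ?thesis by (simp add: le_max_iff_disj)
    qed
  qed
  with weaker show "strength V E I e \<le> ?s"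
    by (metis le_max_iff_disj not_le)
qed

lemma induced_conn_le_induced_conn_contr:
  assumes "finite E"
  shows "induced_conn E I U \<le> induced_conn (contr_E E I e') (contr_I I e') (contr_map I e' ` U)"
    (is "_ \<le> induced_conn ?E' ?I' ?U'")
proof (rule edge_conn_greatest)
  let ?c = "contr_map I e'"
  fix A' assume A': "A' \<noteq> {}" "A' \<subset> ?U'"
  define A where "A = {u \<in> U. ?c u \<in> A'}"
  have A: "A \<noteq> {}" "A \<subset> U" using A' unfolding A_def by auto
  have "cut_edges U (induced_edges E I U) I A \<subseteq> cut_edges ?U' (induced_edges ?E' ?I' ?U') ?I' A'"
  proof
    fix g assume g: "g \<in> cut_edges U (induced_edges E I U) I A"
    then have gE: "g \<in> E" and gU: "I g \<subseteq> U"
      by (auto simp: cut_edges_def induced_edges_def)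
    from g obtain a b where ab: "a \<in> I g" "a \<in> A" "b \<in> I g" "b \<in> U" "b \<notin> A"
      by (auto simp: cut_edges_def)
    have "\<not> I g \<subseteq> I e'"
    proof
      assume "I g \<subseteq> I e'"
      then have "?c a = ?c b" using ab by (auto simp: contr_map_def)
      then show False using ab unfolding A_def by auto
    qed
    moreover have "?c a \<in> A'" "?c b \<in> ?U' - A'" using ab unfolding A_def by auto
    ultimately show "g \<in> cut_edges ?U' (induced_edges ?E' ?I' ?U') ?I' A'"
      using gE gU ab unfolding cut_edges_def induced_edges_def contr_E_def contr_I_def by auto
  qed
  then have "enat (card (cut_edges U (induced_edges E I U) I A))
      \<le> enat (card (cut_edges ?U' (induced_edges ?E' ?I' ?U') ?I' A'))"
    by (rule card_cut_edges_mono[rotated]) (use assms in \<open>auto simp: induced_edges_def contr_E_def\<close>)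
  with edge_conn_le_cut[OF A]
  show "induced_conn E I U \<le> enat (card (cut_edges ?U' (induced_edges ?E' ?I' ?U') ?I' A'))"
    by (rule order_trans)
qed

lemma strength_le_strength_contr:
  assumes "finite E"
  shows "strength V E I e \<le> strength (contr_V V I e') (contr_E E I e') (contr_I I e') e"
proof (rule strength_least)
  fix U assume U: "I e \<subseteq> U" "U \<subseteq> V"
  have "induced_conn E I U
      \<le> induced_conn (contr_E E I e') (contr_I I e') (contr_map I e' ` U)"
    using assms by (rule induced_conn_le_induced_conn_contr)
  also have "\<dots> \<le> strength (contr_V V I e') (contr_E E I e') (contr_I I e') e"
    by (rule induced_conn_le_strength) (use U in \<open>auto simp: contr_I_def contr_V_def\<close>)
  finally show "induced_conn E I U \<le> strength (contr_V V I e') (contr_E E I e') (contr_I I e') e" .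
qed

text \<open>A cut of the preimage that does not split e' is the preimage of a cut of the
contracted subhypergraph, with the same crossing edges.\<close>

lemma induced_conn_contr_le_cut:
  assumes H: "hypergraph V E I" and U': "U' \<subseteq> contr_V V I e'"
    and U: "U = {v \<in> V. contr_map I e' v \<in> U'}"
    and A: "A \<noteq> {}" "A \<subset> U" and unsplit: "I e' \<subseteq> A \<or> I e' \<inter> A = {}"
  shows "induced_conn (contr_E E I e') (contr_I I e') U'
           \<le> enat (card (cut_edges U (induced_edges E I U) I A))"
    (is "induced_conn ?E' ?I' U' \<le> _")
proof -
  have IV: "\<And>g. g \<in> E \<Longrightarrow> I g \<subseteq> V" using H by (auto simp: hypergraph_def)
  let ?c = "contr_map I e'"
  define A' where "A' = ?c ` A"
  have saturated: "v \<in> A" if "v \<in> U" "?c v \<in> A'" for v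
  proof -
    from that obtain a where a: "a \<in> A" "?c a = ?c v" unfolding A'_def by auto
    show ?thesis
    proof (cases "v \<in> I e'")
      case True
      then have "a \<in> I e'" using a by (auto simp: contr_map_def split: if_splits)
      then show ?thesis using unsplit a True by blast
    next
      case False
      then show ?thesis using a by (auto simp: contr_map_def split: if_splits)
    qed
  qed
  have image_U: "?c ` U = U'" using U' unfolding U contr_V_def by auto
  obtain u where "u \<in> U" "u \<notin> A" using A by auto
  then have A': "A' \<noteq> {}" "A' \<subset> U'"
    using A saturated image_U unfolding A'_def by auto
  have "cut_edges U' (induced_edges ?E' ?I' U') ?I' A' \<subseteq> cut_edges U (induced_edges E I U) I A"
  proof
    fix g assume g: "g \<in> cut_edges U' (induced_edges ?E' ?I' U') ?I' A'"
    then have gE: "g \<in> E" and "?c ` I g \<subseteq> U'"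
      by (auto simp: cut_edges_def induced_edges_def contr_E_def contr_I_def)
    with IV have gU: "I g \<subseteq> U" unfolding U by auto
    from g obtain v w where "v \<in> I g" "?c v \<in> A'" "w \<in> I g" "?c w \<notin> A'"
      by (auto simp: cut_edges_def contr_I_def)
    with saturated gU have "v \<in> I g" "v \<in> A" "w \<in> I g" "w \<notin> A"
      unfolding A'_def by auto
    then show "g \<in> cut_edges U (induced_edges E I U) I A"
      using gE gU unfolding cut_edges_def induced_edges_def by auto
  qed
  then have "enat (card (cut_edges U' (induced_edges ?E' ?I' U') ?I' A'))
      \<le> enat (card (cut_edges U (induced_edges E I U) I A))"
    using H by (intro card_cut_edges_mono) (auto simp: hypergraph_def induced_edges_def)
  with edge_conn_le_cut[OF A'] show ?thesis by (rule order_trans)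
qed

lemma induced_conn_union_ge_min:
  assumes "finite E" and S: "S \<noteq> {}" "S \<subseteq> U" "S \<subseteq> W"
    and unsplit_cuts: "\<And>A. A \<noteq> {} \<Longrightarrow> A \<subset> U \<Longrightarrow> S \<subseteq> A \<or> S \<inter> A = {} \<Longrightarrow>
           m \<le> enat (card (cut_edges U (induced_edges E I U) I A))"
  shows "min m (induced_conn E I W) \<le> induced_conn E I (U \<union> W)"
proof (rule edge_conn_greatest)
  fix A assume A: "A \<noteq> {}" "A \<subset> U \<union> W"
  have fin: "finite (induced_edges E I (U \<union> W))"
    using assms(1) by (auto simp: induced_edges_def)
  show "min m (induced_conn E I W) \<le> enat (card (cut_edges (U \<union> W) (induced_edges E I (U \<union> W)) I A))"
  proof (cases "A \<inter> W \<noteq> {} \<and> W - A \<noteq> {}")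
    case True
    then have "A \<inter> W \<noteq> {}" "A \<inter> W \<subset> W" by auto
    then have "induced_conn E I W \<le> enat (card (cut_edges W (induced_edges E I W) I (A \<inter> W)))"
      by (rule edge_conn_le_cut)
    also have "\<dots> \<le> enat (card (cut_edges (U \<union> W) (induced_edges E I (U \<union> W)) I A))"
      by (rule card_cut_edges_mono[OF fin]) (auto simp: cut_edges_def induced_edges_def)
    finally show ?thesis by (simp add: min.coboundedI2)
  next
    case False
    then have "A \<inter> U \<noteq> {}" "A \<inter> U \<subset> U" "S \<subseteq> A \<inter> U \<or> S \<inter> (A \<inter> U) = {}"
      using A S by blast+
    then have "m \<le> enat (card (cut_edges U (induced_edges E I U) I (A \<inter> U)))"
      by (rule unsplit_cuts)
    also have "\<dots> \<le> enat (card (cut_edges (U \<union> W) (induced_edges E I (U \<union> W)) I A))"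
      by (rule card_cut_edges_mono[OF fin]) (auto simp: cut_edges_def induced_edges_def)
    finally show ?thesis by (simp add: min.coboundedI1)
  qed
qed

lemma strength_contr_le_strength:
  assumes H: "hypergraph V E I" and "e \<in> E" "e' \<in> E"
    and stronger: "strength V E I e < strength V E I e'"
  shows "strength (contr_V V I e') (contr_E E I e') (contr_I I e') e \<le> strength V E I e"
proof (rule strength_least)
  have fin: "finite E" and IV: "\<And>g. g \<in> E \<Longrightarrow> I g \<subseteq> V" using H by (auto simp: hypergraph_def)
  let ?c = "contr_map I e'"
  fix U' assume U': "contr_I I e' e \<subseteq> U'" "U' \<subseteq> contr_V V I e'"
  define U where "U = {v \<in> V. ?c v \<in> U'}"
  let ?m = "induced_conn (contr_E E I e') (contr_I I e') U'"
  have UV: "U \<subseteq> V" and eU: "I e \<subseteq> U"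
    using U'(1) IV[OF \<open>e \<in> E\<close>] unfolding U_def contr_I_def by auto
  have m_le_cut: "?m \<le> enat (card (cut_edges U (induced_edges E I U) I A))"
    if "A \<noteq> {}" "A \<subset> U" "I e' \<subseteq> A \<or> I e' \<inter> A = {}" for A
    using induced_conn_contr_le_cut[OF H U'(2) U_def that] .
  show "?m \<le> strength V E I e"
  proof (cases "I e' \<inter> U = {}")
    case True
    then have "?m \<le> induced_conn E I U"
      by (intro edge_conn_greatest m_le_cut) auto
    also have "\<dots> \<le> strength V E I e" using eU UV by (rule induced_conn_le_strength)
    finally show ?thesis .
  next
    case False
    then have "I e' \<noteq> {}" "I e' \<subseteq> U"
      using IV[OF \<open>e' \<in> E\<close>] unfolding U_def by (auto simp: contr_map_def)
    obtain W where W: "I e' \<subseteq> W" "W \<subseteq> V" "strength V E I e < induced_conn E I W"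
      using stronger by (rule less_strength_witness)
    have "min ?m (induced_conn E I W) \<le> induced_conn E I (U \<union> W)"
      using fin \<open>I e' \<noteq> {}\<close> \<open>I e' \<subseteq> U\<close> W(1) m_le_cut by (rule induced_conn_union_ge_min)
    also have "\<dots> \<le> strength V E I e"
      using eU UV W(2) by (intro induced_conn_le_strength) auto
    finally show ?thesis using W(3) by (metis min_le_iff_disj not_le)
  qed
qed

theorem lemma2p3:
  fixes V :: "'v set" and E :: "'e set" and I :: "'e \<Rightarrow> 'v set"
    and e e' :: 'e and k :: nat
  assumes "hypergraph V E I" and "e \<in> E" and "e' \<in> E" and "e \<noteq> e'" and "k > 0"
  shows "(strength V E I e \<ge> enat k \<and> strength V E I e' < enat k
            \<longrightarrow> strength V E I e = strength V (E - {e'}) I e)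
       \<and> (strength V E I e < enat k \<and> strength V E I e' \<ge> enat k
            \<longrightarrow> e \<in> contr_E E I e' \<and>
                strength V E I e = strength (contr_V V I e') (contr_E E I e') (contr_I I e') e)"
proof -
  have fin: "finite E" using assms(1) by (simp add: hypergraph_def)
  have deletion: "strength V E I e = strength V (E - {e'}) I e"
    if "enat k \<le> strength V E I e" "strength V E I e' < enat k"
  proof -
    from that(2,1) have "strength V E I e' < strength V E I e" by (rule less_le_trans)
    with fin show ?thesis by (simp add: strength_delete_weaker_edge)
  qed
  have contraction: "e \<in> contr_E E I e' \<and>
      strength V E I e = strength (contr_V V I e') (contr_E E I e') (contr_I I e') e"
    if "strength V E I e < enat k" "enat k \<le> strength V E I e'"
  proof
    from that have stronger: "strength V E I e < strength V E I e'" by (rule less_le_trans)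
    then have "\<not> I e \<subseteq> I e'" using strength_antimono_edge[where I=I and e=e and e'=e' and V=V and E=E] by (auto simp: not_le)
    with \<open>e \<in> E\<close> show "e \<in> contr_E E I e'" by (simp add: contr_E_def)
    show "strength V E I e = strength (contr_V V I e') (contr_E E I e') (contr_I I e') e"
      using strength_le_strength_contr[OF fin] strength_contr_le_strength[OF assms(1-3) stronger]
      by (rule antisym)
  qed
  from deletion contraction show ?thesis by blast
qed

end
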